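(* Let $f:\mathbb{R}^n\to(-\infty,\infty]$ be a function, let $(\bar x,\bar x^* )\in\operatorname{gph}\partial f$, let $g:\mathbb{R}^n\to\mathbb{R}$ be twice continuously differentiable and put $h:=f+g$. Let \[\bar A=\begin{pmatrix} I&0\\ \nabla^2 g(\bar x)& I\end{pmatrix}\in\mathbb{R}^{2n\times 2n}.\] Then, writing $\bar y^*:=\bar x^*+\nabla g(\bar x)$, \begin{align*} &T^h_{\operatorname{gph}\partial h}(\bar x,\bar y^* )=\bar A\,T^f_{\operatorname{gph}\partial f}(\bar x,\bar x^* ),\\ &\widehat N^h_{\operatorname{gph}\partial h}(\bar x,\bar y^* )=\bar A^{-T}\widehat N^f_{\operatorname{gph}\partial f}(\bar x,\bar x^* ),\qquad N^h_{\operatorname{gph}\partial h}(\bar x,\bar y^* )=\bar A^{-T} N^f_{\operatorname{gph}\partial f}(\bar x,\bar x^* ),\\ &\operatorname{gph} D_h(\partial h)(\bar x,\bar y^* )=\bar A\,\operatorname{gph} D_f(\partial f)(\bar x,\bar x^* ),\\ &\operatorname{gph} \widehat D^*_h(\partial h)(\bar x,\bar y^* )=\bar A\,\operatorname{gph} \widehat D^*_f(\partial f)(\bar x,\bar x^* ),\qquad \operatorname{gph} D^*_h(\partial h)(\bar x,\bar y^* )=\bar A\,\operatorname{gph} D^*_f(\partial f)(\bar x,\bar x^* ),\\ &\mathcal{S}_h(\partial h)(\bar x,\bar y^* )=\{\bar A L\mid L\in \mathcal{S}_f(\partial f)(\bar x,\bar x^* )\},\qquad \mathcal{S}^*_h(\partial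 h)(\bar x,\bar y^* )=\{\bar A L^*\mid L\in \mathcal{S}_f(\partial f)(\bar x,\bar x^* )\}. \end{align*}
   Context: For a function $\varphi:\mathbb{R}^n\to(-\infty,\infty]$ finite at $x$, the regular subdifferential is $\widehat\partial\varphi(x)=\{x^*\mid \liminf_{y\to x}\frac{\varphi(y)-\varphi(x)-\langle x^*,y-x\rangle}{\|y-x\|}\ge 0\}$, and the (limiting) subdifferential $\partial\varphi(x)$ is the set of $x^*$ for which there exist $x_k\to x$ with $\varphi(x_k)\to\varphi(x)$ and $x_k^*\to x^*$, $x_k^*\in\widehat\partial\varphi(x_k)$. We write $(x_k,x_k^* )\xrightarrow{\varphi}(x,x^* )$ ($\varphi$-attentive convergence in $\operatorname{gph}\partial\varphi$) if $(x_k,x_k^* )\in\operatorname{gph}\partial\varphi$, $(x_k,x_k^* )\to(x,x^* )$ and $\varphi(x_k)\to\varphi(x)$. For $(x,x^* )\in\operatorname{gph}\partial\varphi$: - the $\varphi$-attentive tangent cone $T^\varphi_{\operatorname{gph}\partial\varphi}(x,x^* )$ is the set of $(u,u^* )$ such that there exist $t_k\downarrow0$ and $(x_k,x_k^* )\xrightarrow{\varphi}(x,x^* )$ with $(u,u^* )=\lim_k ((x_k,x_k^* )-(x,x^* ))/t_k$; - $\widehat N^\varphi_{\operatorname{gph}\partial\varphi}(x,x^* )$ is the polar cone of $T^\varphi_{\operatorname{gph}\partial\varphi}(x,x^* )$, and $N^\varphi_{\operatorname{gph}\partial\varphi}(x,x^* )$ is the set of limits of sequences $(v_k)$ with $v_k\in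 \widehat N^\varphi_{\operatorname{gph}\partial\varphi}(x_k,x_k^* )$ for some $(x_k,x_k^* )\xrightarrow{\varphi}(x,x^* )$; - $\operatorname{gph}D_\varphi(\partial\varphi)(x,x^* )=T^\varphi_{\operatorname{gph}\partial\varphi}(x,x^* )$, $\operatorname{gph}\widehat D^*_\varphi(\partial\varphi)(x,x^* )=\{(u,u^* )\mid (u^*,-u)\in \widehat N^\varphi_{\operatorname{gph}\partial\varphi}(x,x^* )\}$, $\operatorname{gph}D^*_\varphi(\partial\varphi)(x,x^* )=\{(u,u^* )\mid (u^*,-u)\in N^\varphi_{\operatorname{gph}\partial\varphi}(x,x^* )\}$; - $\mathcal Z_{nn}$ is the set of $n$-dimensional subspaces of $\mathbb{R}^n\times\mathbb{R}^n$ with metric $d(L_1,L_2)=\|P_{L_1}-P_{L_2}\|$ ($P_L$ orthogonal projection onto $L$); for $L\in\mathcal Z_{nn}$ the adjoint subspace is $L^*=\{(v^*,u^* )\mid (u^*,-v^* )\in L^\perp\}$; - $\mathcal O^\varphi_{\partial\varphi}$ is the set of $(x,x^* )\in\operatorname{gph}\partial\varphi$ with $T^\varphi_{\operatorname{gph}\partial\varphi}(x,x^* )\in\mathcal Z_{nn}$; the $\varphi$-attentive SC derivative $\mathcal S_\varphi(\partial\varphi)(x,x^* )$ is the set of $L\in\mathcal Z_{nn}$ for which there are $(x_k,x_k^* )\in\mathcal O^\varphi_{\partial\varphi}$ with $(x_k,x_k^* )\xrightarrow{\varphi}(x,x^* )$ and $d(L,T^\varphi_{\operatorname{gph}\partial\varphi}(x_k,x_k^*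 ))\to 0$; and $\mathcal S^*_\varphi(\partial\varphi)(x,x^* )=\{L^*\mid L\in\mathcal S_\varphi(\partial\varphi)(x,x^* )\}$. These are applied with $\varphi=f$ and $\varphi=h$. $A^{-T}$ denotes $(A^T)^{-1}$. *)

theory Defs
  imports "HOL-Analysis.Analysis" "HOL-Library.Extended_Real"
begin

type_synonym 'n pt = "(real^'n) \<times> (real^'n)"

definition rsubdiff :: "(real^'n::finite \<Rightarrow> ereal) \<Rightarrow> real^'n \<Rightarrow> (real^'n) set" where
  "rsubdiff \<phi> x = {xs. \<bar>\<phi> x\<bar> \<noteq> \<infinity> \<and>
      Liminf (at x) (\<lambda>y. (\<phi> y - \<phi> x - ereal (xs \<bullet> (y - x))) / ereal (norm (y - x))) \<ge> 0}"

definition subdiff :: "(real^'n::finite \<Rightarrow> ereal) \<Rightarrow> real^'n \<Rightarrow> (real^'n) set" where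
  "subdiff \<phi> x = {xs. \<bar>\<phi> x\<bar> \<noteq> \<infinity> \<and>
      (\<exists>xk xsk. xk \<longlonglongrightarrow> x \<and> (\<lambda>k. \<phi> (xk k)) \<longlonglongrightarrow> \<phi> x \<and> xsk \<longlonglongrightarrow> xs
               \<and> (\<forall>k. xsk k \<in> rsubdiff \<phi> (xk k)))}"

definition gph_subdiff :: "(real^'n::finite \<Rightarrow> ereal) \<Rightarrow> 'n pt set" where
  "gph_subdiff \<phi> = {(x, xs). xs \<in> subdiff \<phi> x}"

definition att_conv :: "(real^'n::finite \<Rightarrow> ereal) \<Rightarrow> (nat \<Rightarrow> 'n pt) \<Rightarrow> 'n pt \<Rightarrow> bool" where
  "att_conv \<phi> zk z \<longleftrightarrow> (\<forall>k. zk k \<in> gph_subdiff \<phi>) \<and> zk \<longlonglongrightarrow> z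
      \<and> (\<lambda>k. \<phi> (fst (zk k))) \<longlonglongrightarrow> \<phi> (fst z)"

definition att_tangent :: "(real^'n::finite \<Rightarrow> ereal) \<Rightarrow> 'n pt \<Rightarrow> 'n pt set" where
  "att_tangent \<phi> z = {w. \<exists>t zk. (\<forall>k. t k > 0) \<and> decseq t \<and> t \<longlonglongrightarrow> 0 \<and> att_conv \<phi> zk z
      \<and> (\<lambda>k. (1 / t k) *\<^sub>R (zk k - z)) \<longlonglongrightarrow> w}"

definition att_rnormal :: "(real^'n::finite \<Rightarrow> ereal) \<Rightarrow> 'n pt \<Rightarrow> 'n pt set" where
  "att_rnormal \<phi> z = {v. \<forall>w \<in> att_tangent \<phi> z. v \<bullet> w \<le> 0}"

definition att_normal :: "(real^'n::finite \<Rightarrow> ereal) \<Rightarrow> 'n pt \<Rightarrow> 'n pt set" where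
  "att_normal \<phi> z = {v. \<exists>zk vk. att_conv \<phi> zk z \<and> vk \<longlonglongrightarrow> v \<and> (\<forall>k. vk k \<in> att_rnormal \<phi> (zk k))}"

definition gph_D :: "(real^'n::finite \<Rightarrow> ereal) \<Rightarrow> 'n pt \<Rightarrow> 'n pt set" where
  "gph_D \<phi> z = att_tangent \<phi> z"

definition gph_rcoD :: "(real^'n::finite \<Rightarrow> ereal) \<Rightarrow> 'n pt \<Rightarrow> 'n pt set" where
  "gph_rcoD \<phi> z = {(u, us). (us, - u) \<in> att_rnormal \<phi> z}"

definition gph_coD :: "(real^'n::finite \<Rightarrow> ereal) \<Rightarrow> 'n pt \<Rightarrow> 'n pt set" where
  "gph_coD \<phi> z = {(u, us). (us, - u) \<in> att_normal \<phi> z}"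

definition Znn :: "'n::finite pt set set" where
  "Znn = {L. subspace L \<and> dim L = CARD('n)}"

definition proj :: "'n::finite pt set \<Rightarrow> 'n pt \<Rightarrow> 'n pt" where
  "proj L z = (THE p. p \<in> L \<and> z - p \<in> orthogonal_comp L)"

definition subspace_dist :: "'n::finite pt set \<Rightarrow> 'n pt set \<Rightarrow> real" where
  "subspace_dist L1 L2 = onorm (\<lambda>z. proj L1 z - proj L2 z)"

definition adj_subspace :: "'n::finite pt set \<Rightarrow> 'n pt set" where
  "adj_subspace L = {(vs, us). (us, - vs) \<in> orthogonal_comp L}"

definition O_set :: "(real^'n \<Rightarrow> ereal) \<Rightarrow> 'n::finite pt set" where
  "O_set \<phi> = {z \<in> gph_subdiff \<phi>. att_tangent \<phi> z \<in> Znn}"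

definition SC :: "(real^'n \<Rightarrow> ereal) \<Rightarrow> 'n::finite pt \<Rightarrow> 'n pt set set" where
  "SC \<phi> z = {L \<in> Znn. \<exists>zk. (\<forall>k. zk k \<in> O_set \<phi>) \<and> att_conv \<phi> zk z
      \<and> (\<lambda>k. subspace_dist L (att_tangent \<phi> (zk k))) \<longlonglongrightarrow> 0}"

definition SC_star :: "(real^'n \<Rightarrow> ereal) \<Rightarrow> 'n::finite pt \<Rightarrow> 'n pt set set" where
  "SC_star \<phi> z = adj_subspace ` SC \<phi> z"

definition Amat :: "real^'n::finite^'n \<Rightarrow> 'n pt \<Rightarrow> 'n pt" where
  "Amat M = (\<lambda>(u, us). (u, M *v u + us))"

end

theory Submission
  imports Defs
begin

(* The map Phi (x, x') = (x, x' + grad g x) is a C1 diffeomorphism of R^n x R^n with inverse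
   (x, y') |-> (x, y' - grad g x); its derivative at (x, x') is the block matrix A = [[I,0],[hess g x,I]].
   Adding the smooth g shifts every regular subgradient by grad g x, because the difference
   quotient defining regular subgradients only changes by a term tending to 0; hence Phi maps
   gph (subdiff f) onto gph (subdiff h) and f-attentive sequences onto h-attentive ones.
   Difference quotients along such sequences are carried by A, so A maps tangent cones onto
   tangent cones and, by duality, A^-T maps regular normal cones onto each other. Since A depends
   continuously on the base point, the same holds for limiting normals and for limits of tangent
   subspaces. Finally hess g x is symmetric (Schwarz), which turns the statements about A^-T on
   normal vectors (v', -v) into statements about A on coderivative graphs and adjoint subspaces. *)

section \<open>Symmetry of the Hessian\<close>

lemma second_difference_mean_value:
  fixes g :: "'a::real_inner \<Rightarrow> real"
  assumes grad: "\<And>y. (g has_derivative (\<lambda>v. G y \<bullet> v)) (at y)" and t: "t > 0"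
  obtains s where "0 < s" "s < t"
    "g (x + t *\<^sub>R u + t *\<^sub>R v) - g (x + t *\<^sub>R u) - g (x + t *\<^sub>R v) + g x
       = t * ((G (x + s *\<^sub>R u + t *\<^sub>R v) - G (x + s *\<^sub>R u)) \<bullet> u)"
proof -
  define \<psi> where "\<psi> s = g (x + s *\<^sub>R u + t *\<^sub>R v) - g (x + s *\<^sub>R u)" for s
  define \<psi>' where "\<psi>' s = (G (x + s *\<^sub>R u + t *\<^sub>R v) - G (x + s *\<^sub>R u)) \<bullet> u" for s
  have "(\<psi> has_real_derivative \<psi>' s) (at s)" for s
    unfolding \<psi>_def \<psi>'_def has_field_derivative_def
    by (auto intro!: derivative_eq_intros has_derivative_compose[OF _ grad]
        simp: algebra_simps)
  with MVT2[of 0 t \<psi> \<psi>'] t obtain s where "0 < s" "s < t" "\<psi> t - \<psi> 0 = t * \<psi>' s"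
    by auto
  with that show ?thesis by (simp add: \<psi>_def \<psi>'_def algebra_simps)
qed

lemma second_difference_bound:
  fixes g :: "'a::real_inner \<Rightarrow> real"
  assumes grad: "\<And>y. (g has_derivative (\<lambda>v. G y \<bullet> v)) (at y)" and G': "linear G'"
    and approx: "\<And>y. norm (y - x) \<le> t * (norm u + norm v) \<Longrightarrow>
      norm (G y - G x - G' (y - x)) \<le> e * norm (y - x)"
    and t: "t > 0" and e: "e \<ge> 0"
  shows "\<bar>g (x + t *\<^sub>R u + t *\<^sub>R v) - g (x + t *\<^sub>R u) - g (x + t *\<^sub>R v) + g x - t\<^sup>2 * (G' v \<bullet> u)\<bar>
    \<le> 2 * e * (norm u + norm v)\<^sup>2 * t\<^sup>2"
proof -
  interpret G': linear G' by (fact G')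
  define c where "c = norm u + norm v"
  obtain s where s: "0 < s" "s < t" and mv:
    "g (x + t *\<^sub>R u + t *\<^sub>R v) - g (x + t *\<^sub>R u) - g (x + t *\<^sub>R v) + g x
       = t * ((G (x + s *\<^sub>R u + t *\<^sub>R v) - G (x + s *\<^sub>R u)) \<bullet> u)"
    using second_difference_mean_value[OF grad t] by blast
  define y\<^sub>1 where "y\<^sub>1 = x + s *\<^sub>R u + t *\<^sub>R v"
  define y\<^sub>2 where "y\<^sub>2 = x + s *\<^sub>R u"
  have err: "norm (G y - G x - G' (y - x)) \<le> e * (t * c)" if "y = y\<^sub>1 \<or> y = y\<^sub>2" for y
  proof -
    have "norm (y - x) \<le> s * norm u + t * norm v"
      using that s t norm_triangle_ineq[of "s *\<^sub>R u" "t *\<^sub>R v"] by (auto simp: y\<^sub>1_def y\<^sub>2_def)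
    also have "\<dots> \<le> t * c"
      using s by (simp add: c_def distrib_left mult_right_mono)
    finally show ?thesis
      using approx e unfolding c_def by (meson mult_left_mono order_trans)
  qed
  have "G y\<^sub>1 - G y\<^sub>2 - t *\<^sub>R G' v = (G y\<^sub>1 - G x - G' (y\<^sub>1 - x)) - (G y\<^sub>2 - G x - G' (y\<^sub>2 - x))"
    by (simp add: y\<^sub>1_def y\<^sub>2_def G'.add G'.scale)
  also have "norm \<dots> \<le> norm (G y\<^sub>1 - G x - G' (y\<^sub>1 - x)) + norm (G y\<^sub>2 - G x - G' (y\<^sub>2 - x))"
    by (rule norm_triangle_ineq4)
  also have "\<dots> \<le> e * (t * c) + e * (t * c)"
    using err by (intro add_mono) auto
  finally have G_diff: "norm (G y\<^sub>1 - G y\<^sub>2 - t *\<^sub>R G' v) \<le> 2 * e * (t * c)"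
    by (simp add: algebra_simps)
  have "\<bar>t * ((G y\<^sub>1 - G y\<^sub>2) \<bullet> u) - t\<^sup>2 * (G' v \<bullet> u)\<bar> = \<bar>t * ((G y\<^sub>1 - G y\<^sub>2 - t *\<^sub>R G' v) \<bullet> u)\<bar>"
    by (simp add: power2_eq_square algebra_simps)
  also have "\<dots> = t * \<bar>(G y\<^sub>1 - G y\<^sub>2 - t *\<^sub>R G' v) \<bullet> u\<bar>"
    using t by (simp add: abs_mult)
  also have "\<dots> \<le> t * (2 * e * (t * c) * norm u)"
    using t G_diff
    by (intro mult_left_mono order_trans[OF Cauchy_Schwarz_ineq2] mult_right_mono) auto
  also have "\<dots> = 2 * e * t\<^sup>2 * (c * norm u)"
    by (simp add: power2_eq_square algebra_simps)
  also have "\<dots> \<le> 2 * e * t\<^sup>2 * c\<^sup>2"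
    using e by (intro mult_left_mono) (auto simp: c_def power2_eq_square mult_left_mono)
  finally show ?thesis
    using mv by (simp add: y\<^sub>1_def y\<^sub>2_def c_def algebra_simps)
qed

lemma second_difference_approx:
  fixes g :: "'a::real_inner \<Rightarrow> real"
  assumes grad: "\<And>y. (g has_derivative (\<lambda>v. G y \<bullet> v)) (at y)"
    and G': "(G has_derivative G') (at x)" and e: "e > 0"
  shows "\<forall>\<^sub>F t in at_right 0.
    \<bar>g (x + t *\<^sub>R u + t *\<^sub>R v) - g (x + t *\<^sub>R u) - g (x + t *\<^sub>R v) + g x - t\<^sup>2 * (G' v \<bullet> u)\<bar> \<le> e * t\<^sup>2"
proof -
  define c where "c = norm u + norm v"
  define e' where "e' = e / (2 * c\<^sup>2 + 1)"
  have c2: "2 * c\<^sup>2 + 1 > 0" by (simp add: add_nonneg_pos)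
  then have e': "e' > 0" using e by (simp add: e'_def)
  obtain d where d: "d > 0"
    and approx: "\<And>y. norm (y - x) < d \<Longrightarrow> norm (G y - G x - G' (y - x)) \<le> e' * norm (y - x)"
    using G' e' unfolding has_derivative_at_alt by blast
  have "((\<lambda>t. t * c) \<longlongrightarrow> 0 * c) (at_right 0)"
    by (intro tendsto_intros)
  then have "\<forall>\<^sub>F t in at_right 0. t * c < d"
    using d by (simp add: order_tendstoD(2))
  then have "\<forall>\<^sub>F t in at_right 0. 0 < t \<and> t * c < d"
    by (simp add: eventually_at_right_less eventually_conj)
  then show ?thesis
  proof eventually_elim
    case (elim t)
    then have "\<bar>g (x + t *\<^sub>R u + t *\<^sub>R v) - g (x + t *\<^sub>R u) - g (x + t *\<^sub>R v) + g x - t\<^sup>2 * (G' v \<bullet> u)\<bar>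
        \<le> 2 * e' * c\<^sup>2 * t\<^sup>2"
      using e' approx unfolding c_def
      by (intro second_difference_bound[OF grad has_derivative_linear[OF G']]) force+
    also have "\<dots> \<le> e * t\<^sup>2"
      using c2 e' by (simp add: e'_def field_simps)
    finally show ?case .
  qed
qed

lemma derivative_of_gradient_symmetric:
  fixes g :: "'a::real_inner \<Rightarrow> real"
  assumes grad: "\<And>y. (g has_derivative (\<lambda>v. G y \<bullet> v)) (at y)" and G': "(G has_derivative G') (at x)"
  shows "G' v \<bullet> u = G' u \<bullet> v"
proof -
  define \<Delta> where "\<Delta> u v t = g (x + t *\<^sub>R u + t *\<^sub>R v) - g (x + t *\<^sub>R u) - g (x + t *\<^sub>R v) + g x"
    for u v t
  have \<Delta>_commute: "\<Delta> u v t = \<Delta> v u t" for t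
    by (simp add: \<Delta>_def algebra_simps)
  have bound: "\<bar>G' v \<bullet> u - G' u \<bullet> v\<bar> \<le> 2 * e" if e: "e > 0" for e
  proof -
    have "\<forall>\<^sub>F t in at_right 0. 0 < t \<and> \<bar>\<Delta> u v t - t\<^sup>2 * (G' v \<bullet> u)\<bar> \<le> e * t\<^sup>2
        \<and> \<bar>\<Delta> v u t - t\<^sup>2 * (G' u \<bullet> v)\<bar> \<le> e * t\<^sup>2"
      using second_difference_approx[OF grad G' e, of u v] second_difference_approx[OF grad G' e, of v u]
      by (auto simp: \<Delta>_def eventually_at_right_less eventually_conj)
    then obtain t where t: "0 < t" and uv: "\<bar>\<Delta> u v t - t\<^sup>2 * (G' v \<bullet> u)\<bar> \<le> e * t\<^sup>2"
      and vu: "\<bar>\<Delta> v u t - t\<^sup>2 * (G' u \<bullet> v)\<bar> \<le> e * t\<^sup>2"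
      using eventually_happens'[OF trivial_limit_at_right_real] by blast
    have "t\<^sup>2 * \<bar>G' v \<bullet> u - G' u \<bullet> v\<bar> = \<bar>(\<Delta> u v t - t\<^sup>2 * (G' u \<bullet> v)) - (\<Delta> u v t - t\<^sup>2 * (G' v \<bullet> u))\<bar>"
      by (simp add: abs_mult flip: right_diff_distrib)
    also have "\<dots> \<le> e * t\<^sup>2 + e * t\<^sup>2"
      using uv vu \<Delta>_commute[of t]
        abs_triangle_ineq4[of "\<Delta> u v t - t\<^sup>2 * (G' u \<bullet> v)" "\<Delta> u v t - t\<^sup>2 * (G' v \<bullet> u)"]
      by linarith
    finally have "t\<^sup>2 * \<bar>G' v \<bullet> u - G' u \<bullet> v\<bar> \<le> t\<^sup>2 * (2 * e)"
      by (simp add: algebra_simps)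
    with t show ?thesis by simp
  qed
  have "\<bar>G' v \<bullet> u - G' u \<bullet> v\<bar> \<le> 0"
  proof (rule field_le_epsilon)
    fix e :: real assume "e > 0"
    then show "\<bar>G' v \<bullet> u - G' u \<bullet> v\<bar> \<le> 0 + e" using bound[of "e / 2"] by simp
  qed
  then show ?thesis by simp
qed

lemma hessian_symmetric:
  fixes g :: "real^'n \<Rightarrow> real" and H :: "real^'n^'n"
  assumes "\<And>y. (g has_derivative (\<lambda>v. G y \<bullet> v)) (at y)" and "(G has_derivative (\<lambda>v. H *v v)) (at x)"
  shows "transpose H = H"
proof -
  have "H $ i $ j = H $ j $ i" for i j
    using derivative_of_gradient_symmetric[OF assms, of "axis j 1" "axis i 1"]
    by (simp add: inner_axis matrix_vector_mult_basis column_def)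
  then show ?thesis by (simp add: transpose_def vec_eq_iff)
qed

section \<open>Regular subgradients of a smooth perturbation\<close>

lemma Liminf_add_tendsto_zero_nonneg:
  fixes Q :: "'a \<Rightarrow> ereal" and r :: "'a \<Rightarrow> real"
  assumes Q: "0 \<le> Liminf F Q" and r: "(r \<longlongrightarrow> 0) F"
  shows "0 \<le> Liminf F (\<lambda>y. Q y + ereal (r y))"
  unfolding le_Liminf_iff
proof (intro allI impI)
  fix c :: ereal assume "c < 0"
  then obtain c' where c': "c < ereal c'" "c' < 0"
    using ereal_dense2 by (metis zero_ereal_def less_ereal.simps(1))
  have "\<forall>\<^sub>F y in F. ereal (c' / 2) < Q y"
    using Q c' unfolding le_Liminf_iff by (simp add: zero_ereal_def)
  moreover have "\<forall>\<^sub>F y in F. c' / 2 < r y"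
    using order_tendstoD(1)[OF r, of "c' / 2"] c' by simp
  ultimately show "\<forall>\<^sub>F y in F. c < Q y + ereal (r y)"
  proof eventually_elim
    case (elim y)
    then have "ereal c' < Q y + ereal (r y)"
      by (cases "Q y") auto
    with c' show ?case by order
  qed
qed

lemma Liminf_add_tendsto_zero_nonneg_iff:
  fixes Q :: "'a \<Rightarrow> ereal" and r :: "'a \<Rightarrow> real"
  assumes r: "(r \<longlongrightarrow> 0) F"
  shows "0 \<le> Liminf F (\<lambda>y. Q y + ereal (r y)) \<longleftrightarrow> 0 \<le> Liminf F Q"
proof
  have minus_r: "((\<lambda>y. - r y) \<longlongrightarrow> 0) F"
    using tendsto_minus[OF r] by simp
  have "Q y = Q y + ereal (r y) + ereal (- r y)" for y
    by (cases "Q y") auto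
  moreover assume "0 \<le> Liminf F (\<lambda>y. Q y + ereal (r y))"
  ultimately show "0 \<le> Liminf F Q"
    using Liminf_add_tendsto_zero_nonneg[OF _ minus_r] by fastforce
qed (rule Liminf_add_tendsto_zero_nonneg[OF _ r])

lemma rsubdiff_add_differentiable:
  fixes f :: "real^'n \<Rightarrow> ereal"
  assumes g: "(g has_derivative (\<lambda>v. G \<bullet> v)) (at x)"
  shows "s \<in> rsubdiff (\<lambda>y. f y + ereal (g y)) x \<longleftrightarrow> s - G \<in> rsubdiff f x"
proof (cases "\<bar>f x\<bar> = \<infinity>")
  case True
  then show ?thesis by (auto simp: rsubdiff_def)
next
  case False
  then obtain a where a: "f x = ereal a" by (cases "f x") auto
  define r where "r y = (g y - g x - G \<bullet> (y - x)) / norm (y - x)" for y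
  have r: "(r \<longlongrightarrow> 0) (at x)"
    using g unfolding has_derivative_iff_norm r_def
    by (subst tendsto_rabs_zero_iff[symmetric]) simp
  have "(f y + ereal (g y) - (f x + ereal (g x)) - ereal (s \<bullet> (y - x))) / ereal (norm (y - x))
      = (f y - f x - ereal ((s - G) \<bullet> (y - x))) / ereal (norm (y - x)) + ereal (r y)"
    if "y \<noteq> x" for y
  proof (cases "f y")
    case (real b)
    have "b + g y - (a + g x) - s \<bullet> (y - x) = (b - a - (s - G) \<bullet> (y - x)) + (g y - g x - G \<bullet> (y - x))"
      by (simp add: algebra_simps)
    then have "(b + g y - (a + g x) - s \<bullet> (y - x)) / norm (y - x)
        = (b - a - (s - G) \<bullet> (y - x)) / norm (y - x) + r y"
      unfolding r_def by (metis add_divide_distrib)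
    then show ?thesis
      using that by (simp add: a real)
  qed (use that in \<open>simp_all add: a\<close>)
  then have "Liminf (at x) (\<lambda>y. (f y + ereal (g y) - (f x + ereal (g x)) - ereal (s \<bullet> (y - x))) / ereal (norm (y - x)))
      = Liminf (at x) (\<lambda>y. (f y - f x - ereal ((s - G) \<bullet> (y - x))) / ereal (norm (y - x)) + ereal (r y))"
    by (intro Liminf_eq) (auto simp: eventually_at_filter)
  then show ?thesis
    using False by (simp add: rsubdiff_def a Liminf_add_tendsto_zero_nonneg_iff[OF r])
qed

section \<open>The block matrix \<open>Amat\<close> and its adjoint\<close>

lemma Amat_apply [simp]: "Amat M (u, us) = (u, M *v u + us)"
  by (simp add: Amat_def)

lemma Amat_eq: "Amat M p = (fst p, M *v fst p + snd p)"
  by (cases p) simp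

lemma matrix_vector_mult_uminus_left [simp]: "(- A) *v x = - (A *v x)"
  for A :: "'a::ring_1^'n^'m"
  by (simp add: matrix_vector_mult_def vec_eq_iff flip: sum_negf)

lemma matrix_vector_mult_uminus_right [simp]: "A *v (- x) = - (A *v x)"
  for A :: "'a::ring_1^'n^'m"
  by (simp add: matrix_vector_mult_def vec_eq_iff flip: sum_negf)

lemma vector_matrix_mult_uminus_right [simp]: "x v* (- A) = - (x v* A)"
  for A :: "'a::ring_1^'n^'m"
  by (simp add: vector_matrix_mult_def vec_eq_iff flip: sum_negf)

lemma Amat_uminus_inverse [simp]: "Amat M (Amat (- M) p) = p" "Amat (- M) (Amat M p) = p"
  by (simp_all add: Amat_eq)

lemma Amat_image_uminus [simp]: "Amat (- M) ` Amat M ` L = L"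
  by (simp add: image_image)

lemma linear_Amat: "linear (Amat M)"
  by (intro linearI)
    (auto simp: Amat_eq matrix_vector_right_distrib matrix_vector_mult_scaleR scaleR_prod_def
        scaleR_right_distrib)

lemma adjoint_Amat:
  fixes M :: "real^'n::finite^'n"
  shows "adjoint (Amat M) p = (fst p + transpose M *v snd p, snd p)"
proof -
  have "adjoint (Amat M) = (\<lambda>p. (fst p + transpose M *v snd p, snd p))"
  proof (rule adjoint_unique, intro allI)
    fix p q :: "'n pt"
    have "(M *v fst p) \<bullet> snd q = fst p \<bullet> (transpose M *v snd q)"
      by (simp add: dot_lmul_matrix[symmetric] inner_commute)
    then show "Amat M p \<bullet> q = p \<bullet> (fst q + transpose M *v snd q, snd q)"
      by (cases p, cases q) (simp add: inner_add_left inner_add_right)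
  qed
  then show ?thesis by simp
qed

lemma inner_Amat_left: "Amat M w \<bullet> v = w \<bullet> adjoint (Amat M) v"
  using adjoint_works[OF linear_Amat[of M], of w v] by simp

lemma inner_Amat_right: "v \<bullet> Amat M w = adjoint (Amat M) v \<bullet> w"
  by (metis inner_commute inner_Amat_left)

lemma adjoint_Amat_uminus_inverse [simp]:
  "adjoint (Amat M) (adjoint (Amat (- M)) p) = p" "adjoint (Amat (- M)) (adjoint (Amat M) p) = p"
  by (auto simp: adjoint_Amat)

lemma bij_adjoint_Amat: "bij (adjoint (Amat M))"
  by (rule bij_betw_byWitness[of _ "adjoint (Amat (- M))"]) auto

lemma mem_inv_adjoint_Amat_image: "v \<in> inv (adjoint (Amat M)) ` S \<longleftrightarrow> adjoint (Amat M) v \<in> S"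
  by (simp flip: bij_vimage_eq_inv_image[OF bij_adjoint_Amat])

lemma tendsto_adjoint_Amat:
  assumes "Mk \<longlonglongrightarrow> M" "vk \<longlonglongrightarrow> v"
  shows "(\<lambda>k. adjoint (Amat (Mk k)) (vk k)) \<longlonglongrightarrow> adjoint (Amat M) v"
proof -
  have "(\<lambda>k. (transpose (Mk k) *v snd (vk k)) $ i) \<longlonglongrightarrow> (transpose M *v snd v) $ i" for i
    unfolding matrix_vector_mult_def transpose_def
    by (simp, intro tendsto_intros assms)
  then have "(\<lambda>k. transpose (Mk k) *v snd (vk k)) \<longlonglongrightarrow> transpose M *v snd v"
    by (rule vec_tendstoI)
  then show ?thesis
    unfolding adjoint_Amat by (intro tendsto_intros assms)
qed

lemma mem_Amat_image_iff: "p \<in> Amat M ` S \<longleftrightarrow> Amat (- M) p \<in> S"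
  by (auto intro: image_eqI[of p "Amat M" "Amat (- M) p"])

lemma coderivative_graph_Amat:
  assumes "transpose M = M"
  shows "{(u, us). (us, - u) \<in> inv (adjoint (Amat M)) ` S} = Amat M ` {(u, us). (us, - u) \<in> S}"
  using assms by (auto simp: mem_inv_adjoint_Amat_image mem_Amat_image_iff adjoint_Amat)

lemma orthogonal_comp_Amat_image:
  "orthogonal_comp (Amat M ` L) = inv (adjoint (Amat M)) ` orthogonal_comp L"
  by (rule set_eqI) (simp add: mem_inv_adjoint_Amat_image orthogonal_comp_def orthogonal_def inner_Amat_left)

lemma adj_subspace_Amat_image:
  assumes "transpose M = M"
  shows "adj_subspace (Amat M ` L) = Amat M ` adj_subspace L"
  unfolding adj_subspace_def orthogonal_comp_Amat_image using assms by (rule coderivative_graph_Amat)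

lemma Amat_image_Znn_iff: "Amat M ` L \<in> Znn \<longleftrightarrow> L \<in> Znn"
proof -
  have "Amat M ` L \<in> Znn" if "L \<in> Znn" for M and L :: "'n::finite pt set"
  proof -
    have "inj (Amat M)"
      by (metis Amat_uminus_inverse(2) injI)
    then show ?thesis
      using that linear_Amat
      by (auto simp: Znn_def linear_subspace_image[OF linear_Amat] dim_image_eq[OF linear_Amat] inj_on_subset)
  qed
  from this[of L M] this[of "Amat M ` L" "- M"] show ?thesis by auto
qed

lemma norm_matrix_vector_mult_le:
  fixes A :: "real^'n^'m"
  shows "norm (A *v x) \<le> real CARD('m) * real CARD('n) * norm A * norm x"
proof -
  have "\<bar>A $ i $ j\<bar> \<le> norm A" for i j
    by (rule order_trans[OF component_le_norm_cart Finite_Cartesian_Product.norm_nth_le])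
  then have bound: "onorm ((*v) A) \<le> real CARD('m) * real CARD('n) * norm A"
    by (rule onorm_le_matrix_component)
  have "norm (A *v x) \<le> onorm ((*v) A) * norm x"
    by (rule onorm[OF matrix_vector_mul_bounded_linear])
  also have "\<dots> \<le> real CARD('m) * real CARD('n) * norm A * norm x"
    using bound by (rule mult_right_mono) simp
  finally show ?thesis .
qed

lemma norm_Amat_diff_le:
  fixes M N :: "real^'n::finite^'n"
  shows "norm (Amat M p - Amat N p) \<le> real CARD('n) * real CARD('n) * norm (M - N) * norm p"
proof -
  have "Amat M p - Amat N p = (0, (M - N) *v fst p)"
    by (simp add: Amat_eq matrix_vector_mult_diff_rdistrib)
  then have "norm (Amat M p - Amat N p) = norm ((M - N) *v fst p)"
    by (simp add: norm_Pair)
  also have "\<dots> \<le> real CARD('n) * real CARD('n) * norm (M - N) * norm (fst p)"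
    by (rule norm_matrix_vector_mult_le)
  also have "\<dots> \<le> real CARD('n) * real CARD('n) * norm (M - N) * norm p"
    using norm_fst_le[of "fst p" "snd p"] by (intro mult_left_mono) simp_all
  finally show ?thesis .
qed

lemma norm_Amat_le:
  fixes M :: "real^'n::finite^'n"
  assumes "norm M \<le> B"
  shows "norm (Amat M p) \<le> (1 + real CARD('n) * real CARD('n) * B) * norm p"
proof -
  have "Amat M p = p + (Amat M p - Amat 0 p)"
    by (simp add: Amat_eq)
  then have "norm (Amat M p) \<le> norm p + norm (Amat M p - Amat 0 p)"
    by (metis norm_triangle_ineq)
  also have "\<dots> \<le> norm p + real CARD('n) * real CARD('n) * norm M * norm p"
    using norm_Amat_diff_le[of M p 0] by simp
  also have "\<dots> \<le> norm p + real CARD('n) * real CARD('n) * B * norm p"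
    using assms by (intro add_left_mono mult_right_mono mult_left_mono) simp_all
  finally show ?thesis
    by (simp add: algebra_simps)
qed

lemma norm_le_Amat:
  fixes M :: "real^'n::finite^'n"
  assumes "norm M \<le> B"
  shows "norm p \<le> (1 + real CARD('n) * real CARD('n) * B) * norm (Amat M p)"
  using norm_Amat_le[of "- M" B "Amat M p"] assms by simp

section \<open>Orthogonal projections and the distance of subspaces\<close>

lemma orthogonal_comp_inner_zero: "a \<in> orthogonal_comp S \<Longrightarrow> b \<in> S \<Longrightarrow> a \<bullet> b = 0"
  by (auto simp: orthogonal_comp_def orthogonal_def inner_commute)

lemma orthogonal_decomp_ex1:
  fixes S :: "'a::euclidean_space set"
  assumes S: "subspace S"
  shows "\<exists>!p. p \<in> S \<and> z - p \<in> orthogonal_comp S"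
proof -
  obtain y w where y: "y \<in> span S" and w: "\<And>v. v \<in> span S \<Longrightarrow> orthogonal w v" and z: "z = y + w"
    using orthogonal_subspace_decomp_exists[of S z] by metis
  have span_S: "span S = S"
    using S by simp
  have y_proj: "y \<in> S \<and> z - y \<in> orthogonal_comp S"
    using y[unfolded span_S] w[unfolded span_S] z unfolding orthogonal_comp_def
    by (auto simp: orthogonal_commute)
  show ?thesis
  proof (rule ex1I[of _ y])
    fix p assume p: "p \<in> S \<and> z - p \<in> orthogonal_comp S"
    have "y - p \<in> S"
      using p y_proj S by (simp add: subspace_diff)
    moreover have "y - p \<in> orthogonal_comp S"
      using subspace_diff[OF subspace_orthogonal_comp, of "z - p" S "z - y"] p y_proj by simp
    ultimately have "(y - p) \<bullet> (y - p) = 0"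
      by (simp add: orthogonal_comp_inner_zero)
    then show "p = y" by simp
  qed (fact y_proj)
qed

lemma
  assumes "subspace S"
  shows proj_in: "proj S z \<in> S" and proj_orthogonal: "z - proj S z \<in> orthogonal_comp S"
  using theI'[OF orthogonal_decomp_ex1[OF assms, of z]] unfolding proj_def by auto

lemma proj_eqI:
  assumes "subspace S" "p \<in> S" "z - p \<in> orthogonal_comp S"
  shows "proj S z = p"
  unfolding proj_def using orthogonal_decomp_ex1[OF assms(1), of z] assms by (blast intro: the1_equality)

lemma proj_of_mem: "subspace S \<Longrightarrow> x \<in> S \<Longrightarrow> proj S x = x"
  by (rule proj_eqI) (auto simp: orthogonal_comp_def orthogonal_def)

lemma linear_proj:
  fixes S :: "'n::finite pt set"
  assumes S: "subspace S"
  shows "linear (proj S)"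
proof
  note S_orth = subspace_orthogonal_comp[of S]
  fix x y :: "'n pt" and c :: real
  show "proj S (x + y) = proj S x + proj S y"
  proof (rule proj_eqI[OF S])
    show "proj S x + proj S y \<in> S"
      using proj_in[OF S] S by (simp add: subspace_add)
    show "x + y - (proj S x + proj S y) \<in> orthogonal_comp S"
      using subspace_add[OF S_orth proj_orthogonal[OF S, of x] proj_orthogonal[OF S, of y]]
      by (simp add: algebra_simps)
  qed
  show "proj S (c *\<^sub>R x) = c *\<^sub>R proj S x"
  proof (rule proj_eqI[OF S])
    show "c *\<^sub>R proj S x \<in> S"
      using proj_in[OF S] S by (simp add: subspace_scale)
    show "c *\<^sub>R x - c *\<^sub>R proj S x \<in> orthogonal_comp S"
      using subspace_scale[OF S_orth proj_orthogonal[OF S, of x], of c]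
      by (simp add: scaleR_diff_right)
  qed
qed

lemma proj_closest:
  assumes S: "subspace S" and m: "m \<in> S"
  shows "norm (z - proj S z) \<le> norm (z - m)"
proof -
  have "proj S z - m \<in> S"
    using proj_in[OF S] m S by (simp add: subspace_diff)
  then have "(z - proj S z) \<bullet> (proj S z - m) = 0"
    by (rule orthogonal_comp_inner_zero[OF proj_orthogonal[OF S]])
  then have "(norm (z - m))\<^sup>2 = (norm (z - proj S z))\<^sup>2 + (norm (proj S z - m))\<^sup>2"
    using norm_add_Pythagorean[of "z - proj S z" "proj S z - m"] by (simp add: orthogonal_def)
  then show ?thesis
    by - (rule power2_le_imp_le, simp_all)
qed

lemma norm_proj_pythagorean:
  assumes "subspace S"
  shows "(norm z)\<^sup>2 = (norm (proj S z))\<^sup>2 + (norm (z - proj S z))\<^sup>2"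
proof -
  have "proj S z \<bullet> (z - proj S z) = 0"
    by (subst inner_commute)
      (rule orthogonal_comp_inner_zero[OF proj_orthogonal[OF assms] proj_in[OF assms]])
  then show ?thesis
    using norm_add_Pythagorean[of "proj S z" "z - proj S z"] by (simp add: orthogonal_def)
qed

lemma norm_proj_le: "subspace S \<Longrightarrow> norm (proj S z) \<le> norm z"
  by (drule norm_proj_pythagorean[of _ z]) (rule power2_le_imp_le, simp_all)

lemma norm_diff_proj_le: "subspace S \<Longrightarrow> norm (z - proj S z) \<le> norm z"
  by (drule norm_proj_pythagorean[of _ z]) (rule power2_le_imp_le, simp_all)

lemma bounded_linear_proj: "subspace S \<Longrightarrow> bounded_linear (proj S)"
  using linear_proj linear_conv_bounded_linear by blast

lemma subspace_dist_nonneg: "subspace L \<Longrightarrow> subspace M \<Longrightarrow> 0 \<le> subspace_dist L M"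
  unfolding subspace_dist_def by (intro onorm_pos_le bounded_linear_sub bounded_linear_proj)

lemma subspace_dist_commute: "subspace_dist L M = subspace_dist M L"
proof -
  have "(\<lambda>z. proj L z - proj M z) = (\<lambda>z. - (proj M z - proj L z))"
    by simp
  then show ?thesis
    unfolding subspace_dist_def by (simp only: onorm_neg)
qed

lemma norm_diff_proj_le_subspace_dist:
  assumes L: "subspace L" and M: "subspace M" and x: "x \<in> L"
  shows "norm (x - proj M x) \<le> subspace_dist L M * norm x"
proof -
  have "x - proj M x = proj L x - proj M x"
    using proj_of_mem[OF L x] by simp
  then show ?thesis
    unfolding subspace_dist_def
    using onorm[OF bounded_linear_sub[OF bounded_linear_proj[OF L] bounded_linear_proj[OF M]], of x]
    by simp
qed

text \<open>Write \<open>P\<^sub>L z - P\<^sub>M z = (P\<^sub>L z - P\<^sub>M P\<^sub>L z) - P\<^sub>M a\<close> with \<open>a = z - P\<^sub>L z \<bottom> L\<close>; the first term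
  is controlled by the first hypothesis, and \<open>b = P\<^sub>M a\<close> by the second through
  \<open>|b|\<^sup>2 = a \<bullet> b = a \<bullet> (b - P\<^sub>L b)\<close>.\<close>
lemma subspace_dist_le:
  fixes L M :: "'n::finite pt set"
  assumes L: "subspace L" and M: "subspace M" and "e\<^sub>1 \<ge> 0" "e\<^sub>2 \<ge> 0"
    and L_near_M: "\<And>x. x \<in> L \<Longrightarrow> norm (x - proj M x) \<le> e\<^sub>1 * norm x"
    and M_near_L: "\<And>y. y \<in> M \<Longrightarrow> norm (y - proj L y) \<le> e\<^sub>2 * norm y"
  shows "subspace_dist L M \<le> e\<^sub>1 + e\<^sub>2"
  unfolding subspace_dist_def
proof (rule onorm_le)
  fix z :: "'n pt"
  interpret P\<^sub>M: linear "proj M" by (rule linear_proj[OF M])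
  define a where "a = z - proj L z"
  define b where "b = proj M a"
  have split: "proj L z - proj M z = (proj L z - proj M (proj L z)) - b"
    by (simp add: a_def b_def P\<^sub>M.diff)
  have "norm (proj L z - proj M (proj L z)) \<le> e\<^sub>1 * norm (proj L z)"
    by (rule L_near_M[OF proj_in[OF L]])
  also have "\<dots> \<le> e\<^sub>1 * norm z"
    using norm_proj_le[OF L] \<open>e\<^sub>1 \<ge> 0\<close> by (rule mult_left_mono)
  finally have first: "norm (proj L z - proj M (proj L z)) \<le> e\<^sub>1 * norm z" .
  have a_orth: "a \<in> orthogonal_comp L" and b_in: "b \<in> M"
    unfolding a_def b_def by (rule proj_orthogonal[OF L], rule proj_in[OF M])
  have "(norm b)\<^sup>2 = a \<bullet> b"
    using orthogonal_comp_inner_zero[OF proj_orthogonal[OF M, of a] b_in]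
    by (simp add: b_def power2_norm_eq_inner inner_diff_left)
  also have "\<dots> = a \<bullet> (b - proj L b)"
    using orthogonal_comp_inner_zero[OF a_orth proj_in[OF L, of b]] by (simp add: inner_diff_right)
  also have "\<dots> \<le> norm a * norm (b - proj L b)"
    by (rule order_trans[OF abs_ge_self Cauchy_Schwarz_ineq2])
  also have "\<dots> \<le> norm a * (e\<^sub>2 * norm b)"
    by (intro mult_left_mono M_near_L b_in) simp
  finally have "norm b * norm b \<le> (e\<^sub>2 * norm a) * norm b"
    by (simp add: power2_eq_square algebra_simps)
  then have "norm b \<le> e\<^sub>2 * norm a"
    by (cases "norm b = 0") (use \<open>e\<^sub>2 \<ge> 0\<close> in auto)
  also have "\<dots> \<le> e\<^sub>2 * norm z"
    using norm_diff_proj_le[OF L] \<open>e\<^sub>2 \<ge> 0\<close> unfolding a_def by (rule mult_left_mono)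
  finally have second: "norm b \<le> e\<^sub>2 * norm z" .
  have "norm (proj L z - proj M z) \<le> norm (proj L z - proj M (proj L z)) + norm b"
    unfolding split by (rule norm_triangle_ineq4)
  also have "\<dots> \<le> (e\<^sub>1 + e\<^sub>2) * norm z"
    using first second by (simp add: algebra_simps)
  finally show "norm (proj L z - proj M z) \<le> (e\<^sub>1 + e\<^sub>2) * norm z" .
qed

lemma norm_diff_proj_linear_image_le:
  fixes L M :: "'n::finite pt set"
  assumes L: "subspace L" and M: "subspace M" and S: "linear S" and x: "x \<in> L"
    and close: "norm (T x - S x) \<le> e * norm x"
    and S_bound: "\<And>y. norm (S y) \<le> C * norm y"
    and T_lower: "norm x \<le> C * norm (T x)"
    and "e \<ge> 0" "C \<ge> 0"
  shows "norm (T x - proj (S ` M) (T x)) \<le> C * (e + C * subspace_dist L M) * norm (T x)"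
proof -
  have "subspace_dist L M \<ge> 0"
    using L M by (rule subspace_dist_nonneg)
  have "S (proj M x) \<in> S ` M"
    using proj_in[OF M] by blast
  then have "norm (T x - proj (S ` M) (T x)) \<le> norm (T x - S (proj M x))"
    by (rule proj_closest[OF linear_subspace_image[OF S M]])
  also have "T x - S (proj M x) = (T x - S x) + S (x - proj M x)"
    by (simp add: linear_diff[OF S])
  also have "norm \<dots> \<le> norm (T x - S x) + norm (S (x - proj M x))"
    by (rule norm_triangle_ineq)
  also have "\<dots> \<le> e * norm x + C * (subspace_dist L M * norm x)"
  proof (rule add_mono[OF close])
    have "norm (S (x - proj M x)) \<le> C * norm (x - proj M x)"
      by (rule S_bound)
    also have "\<dots> \<le> C * (subspace_dist L M * norm x)"
      using norm_diff_proj_le_subspace_dist[OF L M x] \<open>C \<ge> 0\<close> by (rule mult_left_mono)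
    finally show "norm (S (x - proj M x)) \<le> C * (subspace_dist L M * norm x)" .
  qed
  also have "\<dots> = (e + C * subspace_dist L M) * norm x"
    by (simp add: algebra_simps)
  also have "\<dots> \<le> (e + C * subspace_dist L M) * (C * norm (T x))"
    using T_lower \<open>e \<ge> 0\<close> \<open>C \<ge> 0\<close> \<open>subspace_dist L M \<ge> 0\<close> by (intro mult_left_mono) simp_all
  finally show ?thesis
    by (simp add: algebra_simps)
qed

lemma subspace_dist_linear_images_le:
  fixes L M :: "'n::finite pt set"
  assumes L: "subspace L" and M: "subspace M" and T: "linear T" and S: "linear S"
    and close: "\<And>x. norm (T x - S x) \<le> e * norm x"
    and bounds: "\<And>x. norm (T x) \<le> C * norm x" "\<And>x. norm (S x) \<le> C * norm x"
    and lower: "\<And>x. norm x \<le> C * norm (T x)" "\<And>x. norm x \<le> C * norm (S x)"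
    and "e \<ge> 0" "C \<ge> 0"
  shows "subspace_dist (T ` L) (S ` M) \<le> 2 * C * (e + C * subspace_dist L M)"
proof -
  define \<delta> where "\<delta> = C * (e + C * subspace_dist L M)"
  have "\<delta> \<ge> 0"
    using subspace_dist_nonneg[OF L M] \<open>e \<ge> 0\<close> \<open>C \<ge> 0\<close> by (simp add: \<delta>_def)
  have "norm (y - proj (S ` M) y) \<le> \<delta> * norm y" if y: "y \<in> T ` L" for y
  proof -
    obtain x where "x \<in> L" "y = T x"
      using y by blast
    then show ?thesis
      using norm_diff_proj_linear_image_le[where T = T, OF L M S \<open>x \<in> L\<close> close bounds(2) lower(1)]
        assms(10,11)
      by (simp add: \<delta>_def)
  qed
  moreover have "norm (y - proj (T ` L) y) \<le> \<delta> * norm y" if y: "y \<in> S ` M" for y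
  proof -
    obtain x where "x \<in> M" "y = S x"
      using y by blast
    moreover have "norm (S x - T x) \<le> e * norm x"
      using close[of x] by (simp add: norm_minus_commute)
    ultimately show ?thesis
      using norm_diff_proj_linear_image_le[where T = S, OF M L T \<open>x \<in> M\<close> _ bounds(1) lower(2)]
        assms(10,11)
      by (simp add: \<delta>_def subspace_dist_commute)
  qed
  ultimately have "subspace_dist (T ` L) (S ` M) \<le> \<delta> + \<delta>"
    using \<open>\<delta> \<ge> 0\<close> linear_subspace_image[OF T L] linear_subspace_image[OF S M]
    by (intro subspace_dist_le) auto
  then show ?thesis
    by (simp add: \<delta>_def)
qed

lemma tendsto_subspace_dist_Amat_image:
  fixes N :: "real^'n::finite^'n"
  assumes L: "subspace L" and Lk: "\<And>k. subspace (Lk k)" and N: "Nk \<longlonglongrightarrow> N"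
    and d: "(\<lambda>k. subspace_dist L (Lk k)) \<longlonglongrightarrow> 0"
  shows "(\<lambda>k. subspace_dist (Amat N ` L) (Amat (Nk k) ` Lk k)) \<longlonglongrightarrow> 0"
proof (rule Lim_null_comparison)
  define K where "K = real CARD('n) * real CARD('n)"
  define C where "C = 1 + K * (norm N + 1)"
  define e where "e k = K * norm (N - Nk k)" for k
  have "C \<ge> 0" "e k \<ge> 0" for k
    by (simp_all add: K_def C_def e_def)
  have close: "norm (Amat N p - Amat (Nk k) p) \<le> e k * norm p" for k p
    using norm_Amat_diff_le[of N p "Nk k"] by (simp add: e_def K_def)
  note bounds = norm_Amat_le[of _ "norm N + 1"] norm_le_Amat[of _ "norm N + 1"]
  have "\<forall>\<^sub>F k in sequentially. norm (Nk k - N) < 1"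
    using N by (simp add: tendsto_iff dist_norm)
  then show "\<forall>\<^sub>F k in sequentially.
      norm (subspace_dist (Amat N ` L) (Amat (Nk k) ` Lk k)) \<le> 2 * C * (e k + C * subspace_dist L (Lk k))"
  proof eventually_elim
    case (elim k)
    then have "norm (Nk k) \<le> norm N + 1"
      using norm_triangle_ineq2[of "Nk k" N] by linarith
    then have "subspace_dist (Amat N ` L) (Amat (Nk k) ` Lk k) \<le> 2 * C * (e k + C * subspace_dist L (Lk k))"
      using bounds[of N] bounds[of "Nk k"] \<open>C \<ge> 0\<close> \<open>e k \<ge> 0\<close>
      by (intro subspace_dist_linear_images_le[OF L Lk linear_Amat linear_Amat close])
        (simp_all add: C_def K_def)
    then show ?case
      using subspace_dist_nonneg[OF linear_subspace_image[OF linear_Amat L]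
          linear_subspace_image[OF linear_Amat Lk]] by simp
  qed
  have "(\<lambda>k. norm (N - Nk k)) \<longlonglongrightarrow> 0"
    using N by (simp add: tendsto_norm_zero_iff LIM_zero_iff norm_minus_commute[of N])
  then have "e \<longlonglongrightarrow> 0"
    unfolding e_def by (rule tendsto_mult_right_zero)
  then have "(\<lambda>k. 2 * C * (e k + C * subspace_dist L (Lk k))) \<longlonglongrightarrow> 2 * C * (0 + C * 0)"
    by (intro tendsto_intros d)
  then show "(\<lambda>k. 2 * C * (e k + C * subspace_dist L (Lk k))) \<longlonglongrightarrow> 0"
    by simp
qed

section \<open>Transport along the graph shift\<close>

lemma difference_quotient_tendsto_derivative:
  assumes \<Phi>: "(\<Phi> has_derivative D) (at z)" and zk: "zk \<longlonglongrightarrow> z" and t: "\<And>k. t k > 0"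
    and w: "(\<lambda>k. (1 / t k) *\<^sub>R (zk k - z)) \<longlonglongrightarrow> w"
  shows "(\<lambda>k. (1 / t k) *\<^sub>R (\<Phi> (zk k) - \<Phi> z)) \<longlonglongrightarrow> D w"
proof -
  interpret D: bounded_linear D
    using \<Phi> by (rule has_derivative_bounded_linear)
  define \<rho> where "\<rho> y = norm (\<Phi> y - \<Phi> z - D (y - z)) / norm (y - z)" for y
  have "(\<rho> \<longlongrightarrow> 0) (at z)" and "\<rho> z = 0"
    using \<Phi> unfolding has_derivative_iff_norm \<rho>_def by simp_all
  then have "(\<lambda>k. \<rho> (zk k)) \<longlonglongrightarrow> 0"
    using isCont_tendsto_compose[OF _ zk, of \<rho>] by (simp add: continuous_at)
  define r where "r k = (1 / t k) *\<^sub>R (\<Phi> (zk k) - \<Phi> z - D (zk k - z))" for k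
  have r_norm: "norm (r k) = \<rho> (zk k) * norm ((1 / t k) *\<^sub>R (zk k - z))" for k
    using t[of k] by (simp add: r_def \<rho>_def)
  have "(\<lambda>k. norm (r k)) \<longlonglongrightarrow> 0 * norm w"
    unfolding r_norm by (intro tendsto_mult tendsto_norm w \<open>(\<lambda>k. \<rho> (zk k)) \<longlonglongrightarrow> 0\<close>)
  then have "(\<lambda>k. r k + D ((1 / t k) *\<^sub>R (zk k - z))) \<longlonglongrightarrow> 0 + D w"
    by (intro tendsto_add D.tendsto w) (simp add: tendsto_norm_zero_iff)
  moreover have "r k + D ((1 / t k) *\<^sub>R (zk k - z)) = (1 / t k) *\<^sub>R (\<Phi> (zk k) - \<Phi> z)" for k
    by (simp add: r_def D.diff D.scaleR scaleR_diff_right)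
  ultimately show ?thesis
    by simp
qed

definition graph_shift :: "(real^'n::finite \<Rightarrow> real^'n) \<Rightarrow> 'n pt \<Rightarrow> 'n pt" where
  "graph_shift G z = (fst z, snd z + G (fst z))"

lemma fst_graph_shift [simp]: "fst (graph_shift G z) = fst z"
  by (simp add: graph_shift_def)

lemma graph_shift_uminus_inverse [simp]:
  "graph_shift (- G) (graph_shift G z) = z" "graph_shift G (graph_shift (- G) z) = z"
  by (simp_all add: graph_shift_def)

lemma graph_shift_has_derivative:
  assumes "(G has_derivative (\<lambda>v. M *v v)) (at (fst z))"
  shows "(graph_shift G has_derivative Amat M) (at z)"
proof -
  have "((\<lambda>p. G (fst p)) has_derivative (\<lambda>p. M *v fst p)) (at z)"
    using has_derivative_compose[OF has_derivative_fst[OF has_derivative_ident] assms] by simp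
  then have "((\<lambda>p. (fst p, snd p + G (fst p))) has_derivative (\<lambda>p. (fst p, snd p + M *v fst p))) (at z)"
    by (intro derivative_eq_intros) auto
  then show ?thesis
    unfolding graph_shift_def Amat_eq by (simp add: add.commute)
qed

lemma tendsto_graph_shift:
  assumes "isCont G (fst z)" "zk \<longlonglongrightarrow> z"
  shows "(\<lambda>k. graph_shift G (zk k)) \<longlonglongrightarrow> graph_shift G z"
  unfolding graph_shift_def
  by (intro tendsto_intros isCont_tendsto_compose[OF assms(1)] assms(2))

lemma att_conv_fst_tendsto: "att_conv \<phi> zk z \<Longrightarrow> (\<lambda>k. fst (zk k)) \<longlonglongrightarrow> fst z"
  by (simp add: att_conv_def tendsto_fst)

locale C2_perturbation =
  fixes f :: "real^'n::finite \<Rightarrow> ereal" and g :: "real^'n \<Rightarrow> real" and G :: "real^'n \<Rightarrow> real^'n"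
    and H :: "real^'n \<Rightarrow> real^'n^'n" and h :: "real^'n \<Rightarrow> ereal"
  assumes grad: "\<forall>x. (g has_derivative (\<lambda>v. G x \<bullet> v)) (at x)"
    and hess: "\<forall>x. (G has_derivative (\<lambda>v. H x *v v)) (at x)"
    and hess_cont: "continuous_on UNIV H"
    and h_def: "h = (\<lambda>x. f x + ereal (g x))"
begin

text \<open>The hypotheses are symmetric in \<open>f\<close> and \<open>h\<close>, as \<open>f = h + (-g)\<close>. So each transport result is
  proved in one direction only: the converse is the same result for this swapped instance.\<close>
lemma C2_perturbation_swap: "C2_perturbation h (- g) (- G) (- H) f"
proof
  show "\<forall>x. ((- g) has_derivative (\<lambda>v. (- G) x \<bullet> v)) (at x)"
    using grad by (auto simp: fun_Compl_def intro!: derivative_eq_intros)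
  show "\<forall>x. ((- G) has_derivative (\<lambda>v. (- H) x *v v)) (at x)"
    using hess by (auto simp: fun_Compl_def intro!: derivative_eq_intros)
  show "continuous_on UNIV (- H)"
    using continuous_on_minus[OF hess_cont] by (simp add: fun_Compl_def)
  show "f = (\<lambda>x. h x + ereal ((- g) x))"
  proof
    fix x show "f x = h x + ereal ((- g) x)"
      unfolding h_def by (cases "f x") auto
  qed
qed

lemma isCont_G: "isCont G x"
  using has_derivative_continuous[OF hess[rule_format, of x]] by (simp add: continuous_at)

lemma isCont_H: "isCont H x"
  using hess_cont by (simp add: continuous_on_eq_continuous_at)

lemma tendsto_h:
  assumes "xk \<longlonglongrightarrow> x" "(\<lambda>k. f (xk k)) \<longlonglongrightarrow> f x"
  shows "(\<lambda>k. h (xk k)) \<longlonglongrightarrow> h x"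
proof -
  have "isCont g x"
    using has_derivative_continuous[OF grad[rule_format, of x]] by (simp add: continuous_at)
  then have "(\<lambda>k. ereal (g (xk k))) \<longlonglongrightarrow> ereal (g x)"
    using isCont_tendsto_compose[OF _ assms(1)] by simp
  then show ?thesis
    unfolding h_def by (intro tendsto_add_ereal_general1 assms(2)) simp_all
qed

lemma subdiff_h_of_subdiff_f:
  assumes "s \<in> subdiff f x"
  shows "s + G x \<in> subdiff h x"
proof -
  obtain xk sk where "\<bar>f x\<bar> \<noteq> \<infinity>" and xk: "xk \<longlonglongrightarrow> x" and "(\<lambda>k. f (xk k)) \<longlonglongrightarrow> f x"
    and "sk \<longlonglongrightarrow> s" and "\<forall>k. sk k \<in> rsubdiff f (xk k)"
    using assms by (auto simp: subdiff_def)
  moreover have "(\<lambda>k. G (xk k)) \<longlonglongrightarrow> G x"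
    using isCont_tendsto_compose[OF isCont_G xk] .
  ultimately show ?thesis
    unfolding subdiff_def
    by (intro CollectI conjI exI[of _ xk] exI[of _ "\<lambda>k. sk k + G (xk k)"] tendsto_h tendsto_add allI)
      (auto simp: h_def rsubdiff_add_differentiable[OF grad[rule_format]])
qed

lemma subdiff_h: "s \<in> subdiff h x \<longleftrightarrow> s - G x \<in> subdiff f x"
  using subdiff_h_of_subdiff_f[of "s - G x" x]
    C2_perturbation.subdiff_h_of_subdiff_f[OF C2_perturbation_swap, of s x]
  by auto

lemma gph_subdiff_h: "graph_shift G z \<in> gph_subdiff h \<longleftrightarrow> z \<in> gph_subdiff f"
  by (cases z) (simp add: gph_subdiff_def graph_shift_def subdiff_h)

lemma att_conv_h:
  assumes "att_conv f zk z"
  shows "att_conv h (\<lambda>k. graph_shift G (zk k)) (graph_shift G z)"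
  using assms unfolding att_conv_def
  by (auto simp: gph_subdiff_h intro: tendsto_graph_shift isCont_G tendsto_h tendsto_fst)

lemma att_tangent_h_supset: "Amat (H (fst z)) ` att_tangent f z \<subseteq> att_tangent h (graph_shift G z)"
proof
  fix w' assume "w' \<in> Amat (H (fst z)) ` att_tangent f z"
  then obtain w t zk where w': "w' = Amat (H (fst z)) w"
    and t: "\<forall>k. t k > 0" "decseq t" "t \<longlonglongrightarrow> 0" and c: "att_conv f zk z"
    and w: "(\<lambda>k. (1 / t k) *\<^sub>R (zk k - z)) \<longlonglongrightarrow> w"
    unfolding att_tangent_def by blast
  have "(\<lambda>k. (1 / t k) *\<^sub>R (graph_shift G (zk k) - graph_shift G z)) \<longlonglongrightarrow> w'"
    unfolding w' using c t
    by (intro difference_quotient_tendsto_derivative[OF graph_shift_has_derivative[OF hess[rule_format]] _ _ w])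
      (auto simp: att_conv_def)
  then show "w' \<in> att_tangent h (graph_shift G z)"
    unfolding att_tangent_def using t att_conv_h[OF c] by blast
qed

lemma att_tangent_h: "att_tangent h (graph_shift G z) = Amat (H (fst z)) ` att_tangent f z"
proof
  interpret swapped: C2_perturbation h "- g" "- G" "- H" f by (rule C2_perturbation_swap)
  have "Amat (- H (fst z)) ` att_tangent h (graph_shift G z) \<subseteq> att_tangent f z"
    using swapped.att_tangent_h_supset[of "graph_shift G z"] by simp
  then show "att_tangent h (graph_shift G z) \<subseteq> Amat (H (fst z)) ` att_tangent f z"
    by (auto simp: mem_Amat_image_iff)
qed (rule att_tangent_h_supset)

lemma att_rnormal_h:
  "v \<in> att_rnormal h (graph_shift G z) \<longleftrightarrow> adjoint (Amat (H (fst z))) v \<in> att_rnormal f z"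
  unfolding att_rnormal_def att_tangent_h by (simp add: inner_Amat_right)

lemma att_normal_h_of_att_normal_f:
  assumes "v \<in> att_normal f z"
  shows "adjoint (Amat (- H (fst z))) v \<in> att_normal h (graph_shift G z)"
proof -
  obtain zk vk where c: "att_conv f zk z" and v: "vk \<longlonglongrightarrow> v" and r: "\<forall>k. vk k \<in> att_rnormal f (zk k)"
    using assms unfolding att_normal_def by blast
  have "adjoint (Amat (- H (fst (zk k)))) (vk k) \<in> att_rnormal h (graph_shift G (zk k))" for k
    using r by (simp add: att_rnormal_h)
  moreover have "(\<lambda>k. adjoint (Amat (- H (fst (zk k)))) (vk k)) \<longlonglongrightarrow> adjoint (Amat (- H (fst z))) v"
    by (intro tendsto_adjoint_Amat tendsto_minus isCont_tendsto_compose[OF isCont_H]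
        att_conv_fst_tendsto[OF c] v)
  ultimately show ?thesis
    unfolding att_normal_def using att_conv_h[OF c] by blast
qed

lemma att_normal_h:
  "v \<in> att_normal h (graph_shift G z) \<longleftrightarrow> adjoint (Amat (H (fst z))) v \<in> att_normal f z"
proof
  interpret swapped: C2_perturbation h "- g" "- G" "- H" f by (rule C2_perturbation_swap)
  show "v \<in> att_normal h (graph_shift G z) \<Longrightarrow> adjoint (Amat (H (fst z))) v \<in> att_normal f z"
    using swapped.att_normal_h_of_att_normal_f[of v "graph_shift G z"] by simp
  show "adjoint (Amat (H (fst z))) v \<in> att_normal f z \<Longrightarrow> v \<in> att_normal h (graph_shift G z)"
    using att_normal_h_of_att_normal_f[of "adjoint (Amat (H (fst z))) v" z] by simp
qed

lemma O_set_h: "graph_shift G z \<in> O_set h \<longleftrightarrow> z \<in> O_set f"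
  by (simp add: O_set_def gph_subdiff_h att_tangent_h Amat_image_Znn_iff)

lemma SC_h_of_SC_f:
  assumes "L \<in> SC f z"
  shows "Amat (H (fst z)) ` L \<in> SC h (graph_shift G z)"
proof -
  obtain zk where L: "L \<in> Znn" and O: "\<forall>k. zk k \<in> O_set f" and c: "att_conv f zk z"
    and d: "(\<lambda>k. subspace_dist L (att_tangent f (zk k))) \<longlonglongrightarrow> 0"
    using assms unfolding SC_def by blast
  have "subspace L" "subspace (att_tangent f (zk k))" for k
    using L O by (auto simp: Znn_def O_set_def)
  then have "(\<lambda>k. subspace_dist (Amat (H (fst z)) ` L) (Amat (H (fst (zk k))) ` att_tangent f (zk k))) \<longlonglongrightarrow> 0"
    by (intro tendsto_subspace_dist_Amat_image isCont_tendsto_compose[OF isCont_H]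
        att_conv_fst_tendsto[OF c] d)
  then have "(\<lambda>k. subspace_dist (Amat (H (fst z)) ` L) (att_tangent h (graph_shift G (zk k)))) \<longlonglongrightarrow> 0"
    by (simp add: att_tangent_h)
  moreover have "Amat (H (fst z)) ` L \<in> Znn" "\<forall>k. graph_shift G (zk k) \<in> O_set h"
    using L O by (simp_all add: Amat_image_Znn_iff O_set_h)
  ultimately show ?thesis
    unfolding SC_def using att_conv_h[OF c] by (auto intro!: exI[of _ "\<lambda>k. graph_shift G (zk k)"])
qed

lemma SC_h: "SC h (graph_shift G z) = {Amat (H (fst z)) ` L | L. L \<in> SC f z}"
proof (intro equalityI subsetI)
  interpret swapped: C2_perturbation h "- g" "- G" "- H" f by (rule C2_perturbation_swap)
  fix L' assume "L' \<in> SC h (graph_shift G z)"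
  then have "Amat (- H (fst z)) ` L' \<in> SC f z"
    using swapped.SC_h_of_SC_f[of L' "graph_shift G z"] by simp
  moreover have "L' = Amat (H (fst z)) ` Amat (- H (fst z)) ` L'"
    using Amat_image_uminus[of "- H (fst z)" L'] by simp
  ultimately show "L' \<in> {Amat (H (fst z)) ` L | L. L \<in> SC f z}"
    by blast
qed (auto intro: SC_h_of_SC_f)

end

theorem proposition3p2:
  fixes f :: "real^'n \<Rightarrow> ereal" and g :: "real^'n \<Rightarrow> real"
    and G :: "real^'n \<Rightarrow> real^'n" and H :: "real^'n \<Rightarrow> real^'n^'n"
    and xb xbs :: "real^'n" and h :: "real^'n \<Rightarrow> ereal"
  assumes f_range: "\<forall>x. f x \<noteq> -\<infinity>"
    and gph: "(xb, xbs) \<in> gph_subdiff f"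
    and grad: "\<forall>x. (g has_derivative (\<lambda>v. G x \<bullet> v)) (at x)"
    and hess: "\<forall>x. (G has_derivative (\<lambda>v. H x *v v)) (at x)"
    and hess_cont: "continuous_on UNIV H"
    and h_def: "h = (\<lambda>x. f x + ereal (g x))"
  shows "att_tangent h (xb, xbs + G xb) = Amat (H xb) ` att_tangent f (xb, xbs)
    \<and> att_rnormal h (xb, xbs + G xb) = inv (adjoint (Amat (H xb))) ` att_rnormal f (xb, xbs)
    \<and> att_normal h (xb, xbs + G xb) = inv (adjoint (Amat (H xb))) ` att_normal f (xb, xbs)
    \<and> gph_D h (xb, xbs + G xb) = Amat (H xb) ` gph_D f (xb, xbs)
    \<and> gph_rcoD h (xb, xbs + G xb) = Amat (H xb) ` gph_rcoD f (xb, xbs)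
    \<and> gph_coD h (xb, xbs + G xb) = Amat (H xb) ` gph_coD f (xb, xbs)
    \<and> SC h (xb, xbs + G xb) = {Amat (H xb) ` L | L. L \<in> SC f (xb, xbs)}
    \<and> SC_star h (xb, xbs + G xb) = {Amat (H xb) ` adj_subspace L | L. L \<in> SC f (xb, xbs)}"
proof -
  interpret C2_perturbation f g G H h
    using grad hess hess_cont h_def by unfold_locales
  define z where "z = (xb, xbs)"
  have shift: "(xb, xbs + G xb) = graph_shift G z" and fst_z: "fst z = xb"
    by (simp_all add: z_def graph_shift_def)
  have sym: "transpose (H xb) = H xb"
    using hessian_symmetric[OF grad[rule_format] hess[rule_format]] .
  have rnormal: "att_rnormal h (graph_shift G z) = inv (adjoint (Amat (H xb))) ` att_rnormal f z"
    by (rule set_eqI) (simp add: mem_inv_adjoint_Amat_image att_rnormal_h fst_z)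
  have normal: "att_normal h (graph_shift G z) = inv (adjoint (Amat (H xb))) ` att_normal f z"
    by (rule set_eqI) (simp add: mem_inv_adjoint_Amat_image att_normal_h fst_z)
  show ?thesis
    unfolding shift gph_D_def gph_rcoD_def gph_coD_def SC_star_def rnormal normal SC_h
    by (simp add: fst_z att_tangent_h coderivative_graph_Amat[OF sym] adj_subspace_Amat_image[OF sym]
        setcompr_eq_image image_image flip: z_def)
qed

end
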